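(* Let $\Sigma$ be a set and let $1\le p<\infty$. Let $\rho$ be a separating quasi-metric on $\Sigma^*$ that is arbitrarily decomposable of order $p$. Suppose $f:\Sigma\to\mathbb{R}$ is strictly positive and $g:\Sigma\to\mathbb{R}$ is non-negative, and let $\bar f,\bar g$ be their canonical homomorphic extensions to $\Sigma^*$. Assume that for all $x,y\in\Sigma^*$, \[\bar f(x)-\bar f(y)\le\rho^p(x,y)\quad\text{and}\quad \bar g(y)-\bar g(x)\le\rho^p(x,y).\] Then the function $Q:\Sigma^*\times\Sigma^*\to\mathbb{R}$ defined by \[Q(x,y)=\min_{\tilde x\in\mathfrak{F}(x),\ \tilde y\in\mathfrak{F}(y)}\Big(\bar f(x)-\bar f(\tilde x)+\bar g(y)-\bar g(\tilde y)+\rho^p(\tilde x,\tilde y)\Big)^{1/p}\] is a quasi-metric on $\Sigma^*$.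
   Context: $\Sigma^*$ is the free monoid on $\Sigma$ (finite words, concatenation, empty word $e$). A word $u$ is a factor of $v$ if $v=xuy$ for some $x,y\in\Sigma^*$; $\mathfrak{F}(v)$ denotes the set of factors of $v$. The canonical homomorphic extension of $f:\Sigma\to\mathbb{R}$ is $\bar f:\Sigma^*\to\mathbb{R}$ with $\bar f(e)=0$ and $\bar f(x_1\cdots x_n)=\sum_{i=1}^n f(x_i)$. A quasi-metric on $X$ is a map $q:X\times X\to\mathbb{R}_{\ge0}$ with $q(x,y)=q(y,x)=0\iff x=y$ and $q(x,z)\le q(x,y)+q(y,z)$; it is separating if $q(x,y)=0$ implies $x=y$. A function $\rho:\Sigma^*\times\Sigma^*\to\mathbb{R}$ is arbitrarily decomposable of order $p$ if for all $x,y\in\Sigma^*$: (i) for every $y'\in\mathfrak{F}(y)$ there exist $x',x_1^*,x_2^*\in\mathfrak{F}(x)$ with $x=x_1^*x'x_2^*$ and $y_1^*,y_2^*,u,v\in\mathfrak{F}(y)$ with $y=y_1^*uy'vy_2^*$ and $\rho(x,y)\ge(\rho^p(x_1^*,y_1^* )+\rho^p(x',y')+\rho^p(x_2^*,y_2^* ))^{1/p}$; and (ii) for every $x'\in\mathfrak{F}(x)$ there exist $y',y_1^*,y_2^*\in\mathfrak{F}(y)$ with $y=y_1^*y'y_2^*$ and $x_1^*,x_2^*,u,v\in\mathfrak{F}(x)$ with $x=x_1^*ux'vx_2^*$ and $\rho(x,y)\ge(\rho^p(x_1^*,y_1^* )+\rho^p(x',y')+\rho^p(x_2^*,y_2^*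 ))^{1/p}$. *)

theory Defs
  imports Complex_Main
begin

definition factors :: "'a list \<Rightarrow> 'a list set" where
  "factors v = {u. \<exists>x y. v = x @ u @ y}"

definition hom_ext :: "('a \<Rightarrow> real) \<Rightarrow> 'a list \<Rightarrow> real" where
  "hom_ext f w = sum_list (map f w)"

definition quasi_metric :: "('b \<Rightarrow> 'b \<Rightarrow> real) \<Rightarrow> bool" where
  "quasi_metric q \<longleftrightarrow>
     (\<forall>x y. q x y \<ge> 0) \<and>
     (\<forall>x y. (q x y = 0 \<and> q y x = 0) \<longleftrightarrow> x = y) \<and>
     (\<forall>x y z. q x z \<le> q x y + q y z)"

definition separating :: "('b \<Rightarrow> 'b \<Rightarrow> real) \<Rightarrow> bool" where
  "separating q \<longleftrightarrow> (\<forall>x y. q x y = 0 \<longrightarrow> x = y)"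

definition arb_decomposable :: "('a list \<Rightarrow> 'a list \<Rightarrow> real) \<Rightarrow> real \<Rightarrow> bool" where
  "arb_decomposable \<rho> p \<longleftrightarrow>
    (\<forall>x y.
      (\<forall>y' \<in> factors y. \<exists>x' x1 x2. x' \<in> factors x \<and> x1 \<in> factors x \<and> x2 \<in> factors x \<and>
          x = x1 @ x' @ x2 \<and>
          (\<exists>y1 y2 u v. y1 \<in> factors y \<and> y2 \<in> factors y \<and> u \<in> factors y \<and> v \<in> factors y \<and>
             y = y1 @ u @ y' @ v @ y2 \<and>
             \<rho> x y \<ge> (\<rho> x1 y1 powr p + \<rho> x' y' powr p + \<rho> x2 y2 powr p) powr (1 / p))) \<and>
      (\<forall>x' \<in> factors x. \<exists>y' y1 y2. y' \<in> factors y \<and> y1 \<in> factors y \<and> y2 \<in> factors y \<and>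
          y = y1 @ y' @ y2 \<and>
          (\<exists>x1 x2 u v. x1 \<in> factors x \<and> x2 \<in> factors x \<and> u \<in> factors x \<and> v \<in> factors x \<and>
             x = x1 @ u @ x' @ v @ x2 \<and>
             \<rho> x y \<ge> (\<rho> x1 y1 powr p + \<rho> x' y' powr p + \<rho> x2 y2 powr p) powr (1 / p))))"

definition Qfun :: "('a \<Rightarrow> real) \<Rightarrow> ('a \<Rightarrow> real) \<Rightarrow> ('a list \<Rightarrow> 'a list \<Rightarrow> real) \<Rightarrow> real
                    \<Rightarrow> 'a list \<Rightarrow> 'a list \<Rightarrow> real" where
  "Qfun f g \<rho> p x y =
     Min ((\<lambda>(xt, yt). (hom_ext f x - hom_ext f xt + hom_ext g y - hom_ext g yt + \<rho> xt yt powr p) powr (1 / p))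
          ` (factors x \<times> factors y))"

end

theory Submission
  imports Defs "HOL-Analysis.Analysis"
begin

text \<open>
  For the triangle
  inequality take optimal pairs for (x,y) and (y,z): the two chosen factors of y overlap in a
  common factor w, and decomposability of \<rho> transports w to a factor x' of x and a factor z'
  of z. The Lipschitz-type hypotheses on f and g pay for the pieces discarded in these
  decompositions, \<rho>(x',z') \<le> \<rho>(x',w) + \<rho>(w,z') by the triangle inequality, and the excess
  (s+t)^p - s^p - t^p is monotone in s and t by convexity of u \<mapsto> u^p, so the total cost is
  at most (Q(x,y) + Q(y,z))^p. For separation, Q(x,y) = 0 forces the factor of x to carry
  the whole f-weight of x, hence to be x itself because f > 0, and then \<rho> separates.
\<close>

lemma convex_on_powr_nonneg:
  fixes p :: real
  assumes "1 \<le> p"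
  shows "convex_on {0..} (\<lambda>x. x powr p)"
proof
  fix t x y :: real
  assume t: "0 < t" "t < 1" and xy: "x \<in> {0..}" "y \<in> {0..}" "x < y"
  show "((1 - t) *\<^sub>R x + t *\<^sub>R y) powr p \<le> (1 - t) * x powr p + t * y powr p"
  proof (cases "x = 0")
    case True
    have "t powr p \<le> t"
      using t assms by (metis less_imp_le powr_mono' powr_one)
    then show ?thesis
      using True xy by (simp add: powr_mult mult_right_mono)
  next
    case False
    then show ?thesis
      using convex_onD[OF powr_convex[OF assms]] t xy by simp
  qed
qed simp

lemma convex_on_increment_mono:
  fixes f :: "real \<Rightarrow> real"
  assumes "convex_on I f" "s \<in> I" "a + t \<in> I" "s \<le> a" "0 \<le> t"
  shows "f (s + t) + f a \<le> f s + f (a + t)"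
proof (cases "a - s + t = 0")
  case True
  then have "a = s" "t = 0" using assms by linarith+
  then show ?thesis by simp
next
  case False
  \<comment> \<open>s + t and a are the convex combinations of s and a + t with swapped weights\<close>
  define l where "l = (a - s) / (a - s + t)"
  have l: "0 \<le> l" "l \<le> 1"
    using assms False by (auto simp: l_def divide_simps)
  have "s + t = (1 - l) *\<^sub>R (a + t) + l *\<^sub>R s" "a = (1 - l) *\<^sub>R s + l *\<^sub>R (a + t)"
    using False by (simp_all add: l_def scaleR_conv_of_real divide_simps) (simp_all add: algebra_simps)
  then have "f (s + t) \<le> (1 - l) * f (a + t) + l * f s" "f a \<le> (1 - l) * f s + l * f (a + t)"
    using convex_onD[OF assms(1) l] assms(2,3) by metis+
  then show ?thesis by (simp add: algebra_simps)
qed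

lemma powr_add_excess_mono:
  fixes s t a b p :: real
  assumes "0 \<le> s" "s \<le> a" "0 \<le> t" "t \<le> b" "1 \<le> p"
  shows "(s + t) powr p - s powr p - t powr p \<le> (a + b) powr p - a powr p - b powr p"
proof -
  note cvx = convex_on_powr_nonneg[OF assms(5)]
  have "(s + t) powr p + a powr p \<le> s powr p + (a + t) powr p"
    by (rule convex_on_increment_mono[OF cvx]) (use assms in auto)
  moreover have "(t + a) powr p + b powr p \<le> t powr p + (b + a) powr p"
    by (rule convex_on_increment_mono[OF cvx]) (use assms in auto)
  ultimately show ?thesis by (simp add: add.commute)
qed

lemma powr_le_powr_iff:
  fixes x y a :: real
  assumes "0 < a" "0 \<le> x" "0 \<le> y"
  shows "x powr a \<le> y powr a \<longleftrightarrow> x \<le> y"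
  using assms by (meson not_le powr_less_mono2 powr_mono2 less_imp_le)

lemma powr_inverse_le_iff:
  fixes S r p :: real
  assumes "0 \<le> S" "0 \<le> r" "0 < p"
  shows "S powr (1 / p) \<le> r \<longleftrightarrow> S \<le> r powr p"
  using powr_le_powr_iff[of p "S powr (1 / p)" r] assms by (simp add: powr_powr)

lemma hom_ext_Nil [simp]: "hom_ext f [] = 0"
  by (simp add: hom_ext_def)

lemma hom_ext_Cons [simp]: "hom_ext f (a # w) = f a + hom_ext f w"
  by (simp add: hom_ext_def)

lemma hom_ext_append [simp]: "hom_ext f (u @ v) = hom_ext f u + hom_ext f v"
  by (simp add: hom_ext_def)

lemma hom_ext_nonneg: "(\<And>a. 0 \<le> f a) \<Longrightarrow> 0 \<le> hom_ext f w"
  by (induction w) auto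

lemma hom_ext_pos: "(\<And>a. 0 < f a) \<Longrightarrow> w \<noteq> [] \<Longrightarrow> 0 < hom_ext f w"
  by (induction w) (auto intro: add_pos_nonneg hom_ext_nonneg less_imp_le)

lemma hom_ext_take_drop:
  "i + n \<le> length w \<Longrightarrow> hom_ext f (take n (drop i w)) = (\<Sum>k\<in>{i..<i+n}. f (w ! k))"
  by (induction n) (simp_all add: take_Suc_conv_app_nth)

lemma factors_refl [simp]: "w \<in> factors w"
  unfolding factors_def by (auto intro: exI[of _ "[]"])

lemma Nil_in_factors [simp]: "[] \<in> factors w"
  unfolding factors_def by auto

lemma factors_trans: "u \<in> factors v \<Longrightarrow> v \<in> factors w \<Longrightarrow> u \<in> factors w"
  unfolding factors_def by (auto, metis append.assoc)

lemma length_factor_le: "u \<in> factors v \<Longrightarrow> length u \<le> length v"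
  unfolding factors_def by auto

lemma factors_antisym:
  assumes "u \<in> factors v" "v \<in> factors u"
  shows "u = v"
proof -
  have "length u = length v"
    using assms by (simp add: le_antisym length_factor_le)
  with assms(1) show ?thesis
    unfolding factors_def by auto
qed

lemma finite_factors: "finite (factors w)"
proof (rule finite_subset)
  show "factors w \<subseteq> {u. set u \<subseteq> set w \<and> length u \<le> length w}"
    unfolding factors_def by auto
qed (rule finite_lists_length_le, simp)

lemma factors_iff_take_drop:
  "u \<in> factors w \<longleftrightarrow> (\<exists>i. i + length u \<le> length w \<and> take (length u) (drop i w) = u)"
proof
  assume "u \<in> factors w"
  then obtain x y where "w = x @ u @ y" unfolding factors_def by auto
  then show "\<exists>i. i + length u \<le> length w \<and> take (length u) (drop i w) = u"
    by (intro exI[of _ "length x"]) simp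
next
  assume "\<exists>i. i + length u \<le> length w \<and> take (length u) (drop i w) = u"
  then obtain i where "take (length u) (drop i w) = u" by blast
  then have "w = take i w @ u @ drop (i + length u) w"
    by (metis append_take_drop_id drop_drop add.commute)
  then show "u \<in> factors w" unfolding factors_def by blast
qed

lemma take_drop_factor_take_drop:
  assumes "i \<le> m" "m + n \<le> i + k"
  shows "take n (drop m w) \<in> factors (take k (drop i w))"
proof -
  have "k = (m - i) + (n + (i + k - (m + n)))"
    using assms by simp
  then have "take k (drop i w) =
      take (m - i) (drop i w) @ take n (drop m w) @ take (i + k - (m + n)) (drop (m + n) w)"
    using assms by (metis take_add drop_drop add.commute le_add_diff_inverse)
  then show ?thesis
    unfolding factors_def by blast
qed

lemma hom_ext_factor_le: "(\<And>a. 0 \<le> f a) \<Longrightarrow> u \<in> factors w \<Longrightarrow> hom_ext f u \<le> hom_ext f w"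
  unfolding factors_def using hom_ext_nonneg[of f] by fastforce

lemma factor_eq_if_hom_ext_eq:
  assumes "\<And>a. 0 < f a" "u \<in> factors w" "hom_ext f u = hom_ext f w"
  shows "u = w"
proof -
  obtain x y where w: "w = x @ u @ y"
    using assms(2) unfolding factors_def by blast
  have "hom_ext f x + hom_ext f y = 0"
    using assms(3) w by simp
  moreover have "0 \<le> hom_ext f x" "0 \<le> hom_ext f y"
    using assms(1) by (simp_all add: hom_ext_nonneg less_imp_le)
  ultimately have "\<not> 0 < hom_ext f x" "\<not> 0 < hom_ext f y"
    by linarith+
  then have "x = []" "y = []"
    using hom_ext_pos[of f, OF assms(1)] by blast+
  then show ?thesis using w by simp
qed

text \<open>
  The common factor is the overlap of the two occurrences; every letter of w covered by both
  occurrences lies in it, which gives the weight inequality.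
\<close>
lemma common_factor_of_factors:
  assumes "u \<in> factors w" "v \<in> factors w"
  obtains c where "c \<in> factors u" "c \<in> factors v"
    "\<And>h. (\<And>a. 0 \<le> h a) \<Longrightarrow> hom_ext h u + hom_ext h v \<le> hom_ext h w + hom_ext h c"
proof -
  obtain i where i: "i + length u \<le> length w" "take (length u) (drop i w) = u"
    using assms(1) factors_iff_take_drop by blast
  obtain j where j: "j + length v \<le> length w" "take (length v) (drop j w) = v"
    using assms(2) factors_iff_take_drop by blast
  define I where "I = {i..<i + length u}"
  define J where "J = {j..<j + length v}"
  define m where "m = max i j"
  define c where "c = take (min (i + length u) (j + length v) - m) (drop m w)"
  have "c \<in> factors u \<and> c \<in> factors v"
  proof (cases "m \<le> min (i + length u) (j + length v)")
    case True
    then show ?thesis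
      using i j take_drop_factor_take_drop[of i m _ "length u" w]
        take_drop_factor_take_drop[of j m _ "length v" w]
      unfolding c_def m_def by simp
  next
    case False
    then have "min (i + length u) (j + length v) - m = 0"
      by linarith
    then show ?thesis
      by (simp add: c_def)
  qed
  moreover have "hom_ext h u + hom_ext h v \<le> hom_ext h w + hom_ext h c"
    if h: "\<And>a. 0 \<le> h a" for h :: "'a \<Rightarrow> real"
  proof -
    have "I \<inter> J = {m..<m + (min (i + length u) (j + length v) - m)}"
      unfolding I_def J_def m_def by auto
    then have "hom_ext h c = (\<Sum>k\<in>I \<inter> J. h (w ! k))"
      using i j unfolding c_def by (subst hom_ext_take_drop) (auto simp: m_def)
    moreover have "hom_ext h u = (\<Sum>k\<in>I. h (w ! k))" "hom_ext h v = (\<Sum>k\<in>J. h (w ! k))"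
      using i j hom_ext_take_drop[of i "length u" w h] hom_ext_take_drop[of j "length v" w h]
      unfolding I_def J_def by simp_all
    moreover have "hom_ext h w = (\<Sum>k\<in>{0..<length w}. h (w ! k))"
      using hom_ext_take_drop[of 0 "length w" w h] by simp
    moreover have "(\<Sum>k\<in>I. h (w ! k)) + (\<Sum>k\<in>J. h (w ! k)) =
        (\<Sum>k\<in>I \<union> J. h (w ! k)) + (\<Sum>k\<in>I \<inter> J. h (w ! k))"
      unfolding I_def J_def by (rule sum.union_inter[symmetric]) auto
    moreover have "(\<Sum>k\<in>I \<union> J. h (w ! k)) \<le> (\<Sum>k\<in>{0..<length w}. h (w ! k))"
      using i j h unfolding I_def J_def by (intro sum_mono2) auto
    ultimately show ?thesis
      by linarith
  qed
  ultimately show ?thesis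
    using that by blast
qed

lemma arb_decomposable_transport_left:
  assumes "arb_decomposable \<rho> p" "\<And>a b. 0 \<le> \<rho> a b" "0 < p" "\<And>a. 0 \<le> f a"
    and f_lip: "\<And>a b. hom_ext f a - hom_ext f b \<le> \<rho> a b powr p"
    and "y' \<in> factors y"
  obtains x' where "x' \<in> factors x" "\<rho> x' y' powr p \<le> \<rho> x y powr p"
    "hom_ext f x - hom_ext f x' + \<rho> x' y' powr p \<le> hom_ext f y - hom_ext f y' + \<rho> x y powr p"
proof -
  obtain x' x1 x2 y1 y2 u v where x: "x = x1 @ x' @ x2" and y: "y = y1 @ u @ y' @ v @ y2"
    and "(\<rho> x1 y1 powr p + \<rho> x' y' powr p + \<rho> x2 y2 powr p) powr (1 / p) \<le> \<rho> x y"
    using assms(1)[unfolded arb_decomposable_def, THEN spec[of _ x], THEN spec[of _ y],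
        THEN conjunct1, THEN bspec, OF assms(6)]
    by blast
  then have dec: "\<rho> x1 y1 powr p + \<rho> x' y' powr p + \<rho> x2 y2 powr p \<le> \<rho> x y powr p"
    using assms(2,3) by (simp add: powr_inverse_le_iff)
  have "x' \<in> factors x"
    unfolding x factors_def by blast
  moreover have "\<rho> x' y' powr p \<le> \<rho> x y powr p"
    using dec by (smt (verit) powr_ge_zero)
  moreover have "hom_ext f x - hom_ext f x' + \<rho> x' y' powr p \<le> hom_ext f y - hom_ext f y' + \<rho> x y powr p"
    using dec f_lip[of x1 y1] f_lip[of x2 y2] hom_ext_nonneg[of f u] hom_ext_nonneg[of f v] assms(4)
    unfolding x y by simp
  ultimately show ?thesis
    using that by blast
qed

lemma arb_decomposable_transport_right:
  assumes "arb_decomposable \<rho> p" "\<And>a b. 0 \<le> \<rho> a b" "0 < p" "\<And>a. 0 \<le> g a"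
    and g_lip: "\<And>a b. hom_ext g b - hom_ext g a \<le> \<rho> a b powr p"
    and "x' \<in> factors x"
  obtains y' where "y' \<in> factors y" "\<rho> x' y' powr p \<le> \<rho> x y powr p"
    "hom_ext g y - hom_ext g y' + \<rho> x' y' powr p \<le> hom_ext g x - hom_ext g x' + \<rho> x y powr p"
proof -
  obtain y' y1 y2 x1 x2 u v where y: "y = y1 @ y' @ y2" and x: "x = x1 @ u @ x' @ v @ x2"
    and "(\<rho> x1 y1 powr p + \<rho> x' y' powr p + \<rho> x2 y2 powr p) powr (1 / p) \<le> \<rho> x y"
    using assms(1)[unfolded arb_decomposable_def, THEN spec[of _ x], THEN spec[of _ y],
        THEN conjunct2, THEN bspec, OF assms(6)]
    by blast
  then have dec: "\<rho> x1 y1 powr p + \<rho> x' y' powr p + \<rho> x2 y2 powr p \<le> \<rho> x y powr p"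
    using assms(2,3) by (simp add: powr_inverse_le_iff)
  have "y' \<in> factors y"
    unfolding y factors_def by blast
  moreover have "\<rho> x' y' powr p \<le> \<rho> x y powr p"
    using dec by (smt (verit) powr_ge_zero)
  moreover have "hom_ext g y - hom_ext g y' + \<rho> x' y' powr p \<le> hom_ext g x - hom_ext g x' + \<rho> x y powr p"
    using dec g_lip[where a = x1 and b = y1] g_lip[where a = x2 and b = y2]
      hom_ext_nonneg[of g u] hom_ext_nonneg[of g v] assms(4)
    unfolding x y by simp
  ultimately show ?thesis
    using that by blast
qed

definition factor_cost ::
    "('a \<Rightarrow> real) \<Rightarrow> ('a \<Rightarrow> real) \<Rightarrow> ('a list \<Rightarrow> 'a list \<Rightarrow> real) \<Rightarrow> real
     \<Rightarrow> 'a list \<Rightarrow> 'a list \<Rightarrow> 'a list \<Rightarrow> 'a list \<Rightarrow> real" where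
  "factor_cost f g \<rho> p x y xt yt =
     hom_ext f x - hom_ext f xt + hom_ext g y - hom_ext g yt + \<rho> xt yt powr p"

lemma Qfun_eq_Min:
  "Qfun f g \<rho> p x y =
     Min ((\<lambda>(xt, yt). factor_cost f g \<rho> p x y xt yt powr (1 / p)) ` (factors x \<times> factors y))"
  unfolding Qfun_def factor_cost_def ..

lemma Qfun_le:
  assumes "xt \<in> factors x" "yt \<in> factors y"
  shows "Qfun f g \<rho> p x y \<le> factor_cost f g \<rho> p x y xt yt powr (1 / p)"
  unfolding Qfun_eq_Min using assms finite_factors by (intro Min_le) auto

lemma Qfun_attained:
  obtains xt yt where "xt \<in> factors x" "yt \<in> factors y"
    "Qfun f g \<rho> p x y = factor_cost f g \<rho> p x y xt yt powr (1 / p)"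
proof -
  have "Qfun f g \<rho> p x y \<in>
      (\<lambda>(xt, yt). factor_cost f g \<rho> p x y xt yt powr (1 / p)) ` (factors x \<times> factors y)"
    unfolding Qfun_eq_Min using finite_factors factors_refl by (intro Min_in) blast+
  then show ?thesis using that by auto
qed

lemma Qfun_nonneg: "0 \<le> Qfun f g \<rho> p x y"
  by (metis Qfun_attained powr_ge_zero)

lemma Qfun_self: "\<rho> x x = 0 \<Longrightarrow> Qfun f g \<rho> p x x = 0"
  using Qfun_le[of x x x x f g \<rho> p] Qfun_nonneg[of f g \<rho> p x x]
  by (simp add: factor_cost_def)

lemma factor_cost_nonneg:
  assumes "\<And>a. 0 \<le> f a" "\<And>a. 0 \<le> g a" "xt \<in> factors x" "yt \<in> factors y"
  shows "0 \<le> factor_cost f g \<rho> p x y xt yt"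
  using hom_ext_factor_le[of f, OF assms(1,3)] hom_ext_factor_le[of g, OF assms(2,4)]
  by (simp add: factor_cost_def)

lemma factor_if_Qfun_eq_0:
  assumes "\<And>a. 0 < f a" "\<And>a. 0 \<le> g a" "separating \<rho>" "Qfun f g \<rho> p x y = 0"
  shows "x \<in> factors y"
proof -
  obtain xt yt where xt: "xt \<in> factors x" and yt: "yt \<in> factors y"
    and cost: "factor_cost f g \<rho> p x y xt yt = 0"
    using Qfun_attained[of x y f g \<rho> p] assms(4) by (metis powr_eq_0_iff)
  have "hom_ext f xt \<le> hom_ext f x" "hom_ext g yt \<le> hom_ext g y"
    using hom_ext_factor_le xt yt assms(1,2) less_imp_le by metis+
  then have "hom_ext f xt = hom_ext f x" "\<rho> xt yt powr p = 0"
    using cost powr_ge_zero[of "\<rho> xt yt" p] unfolding factor_cost_def by linarith+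
  then have "xt = x" "xt = yt"
    using factor_eq_if_hom_ext_eq[OF assms(1) xt] assms(3)
    by (auto simp: separating_def)
  then show ?thesis using yt by simp
qed

lemma factor_cost_triangle:
  fixes \<rho> :: "'a list \<Rightarrow> 'a list \<Rightarrow> real"
  assumes f_nonneg: "\<And>a. 0 \<le> f a" and g_nonneg: "\<And>a. 0 \<le> g a"
    and \<rho>_nonneg: "\<And>a b. 0 \<le> \<rho> a b" and \<rho>_triangle: "\<And>a b c. \<rho> a c \<le> \<rho> a b + \<rho> b c"
    and decomp: "arb_decomposable \<rho> p" and "0 < p"
    and f_lip: "\<And>a b. hom_ext f a - hom_ext f b \<le> \<rho> a b powr p"
    and g_lip: "\<And>a b. hom_ext g b - hom_ext g a \<le> \<rho> a b powr p"
    and xt: "xt \<in> factors x" and yt: "yt \<in> factors y"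
    and yh: "yh \<in> factors y" and zh: "zh \<in> factors z"
  obtains x' z' s t where "x' \<in> factors x" "z' \<in> factors z" "0 \<le> s" "0 \<le> t"
    "s powr p \<le> factor_cost f g \<rho> p x y xt yt" "t powr p \<le> factor_cost f g \<rho> p y z yh zh"
    "factor_cost f g \<rho> p x z x' z' \<le>
       factor_cost f g \<rho> p x y xt yt - s powr p + factor_cost f g \<rho> p y z yh zh - t powr p
       + (s + t) powr p"
proof -
  obtain w where wt: "w \<in> factors yt" and wh: "w \<in> factors yh"
    and overlap: "\<And>h. (\<And>a. 0 \<le> h a) \<Longrightarrow> hom_ext h yt + hom_ext h yh \<le> hom_ext h y + hom_ext h w"
    using common_factor_of_factors[OF yt yh] by metis
  obtain x' where "x' \<in> factors xt" and s_le: "\<rho> x' w powr p \<le> \<rho> xt yt powr p"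
    and left: "hom_ext f xt - hom_ext f x' + \<rho> x' w powr p \<le>
      hom_ext f yt - hom_ext f w + \<rho> xt yt powr p"
    using arb_decomposable_transport_left[OF decomp \<rho>_nonneg \<open>0 < p\<close> f_nonneg f_lip wt] by blast
  obtain z' where "z' \<in> factors zh" and t_le: "\<rho> w z' powr p \<le> \<rho> yh zh powr p"
    and right: "hom_ext g zh - hom_ext g z' + \<rho> w z' powr p \<le>
      hom_ext g yh - hom_ext g w + \<rho> yh zh powr p"
    using arb_decomposable_transport_right[OF decomp \<rho>_nonneg \<open>0 < p\<close> g_nonneg g_lip wh] by blast
  have x': "x' \<in> factors x" and z': "z' \<in> factors z"
    using \<open>x' \<in> factors xt\<close> \<open>z' \<in> factors zh\<close> factors_trans xt zh by blast+
  have "hom_ext f xt \<le> hom_ext f x" "hom_ext g yt \<le> hom_ext g y"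
    "hom_ext f yh \<le> hom_ext f y" "hom_ext g zh \<le> hom_ext g z"
    using hom_ext_factor_le[of f, OF f_nonneg] hom_ext_factor_le[of g, OF g_nonneg] xt yt yh zh
    by blast+
  moreover have "hom_ext f yt + hom_ext f yh \<le> hom_ext f y + hom_ext f w"
    "hom_ext g yt + hom_ext g yh \<le> hom_ext g y + hom_ext g w"
    using overlap f_nonneg g_nonneg by blast+
  moreover have "\<rho> x' z' powr p \<le> (\<rho> x' w + \<rho> w z') powr p"
    using \<rho>_nonneg \<rho>_triangle \<open>0 < p\<close> by (intro powr_mono2) auto
  ultimately show ?thesis
    using s_le t_le left right
    by (intro that[OF x' z' \<rho>_nonneg[of x' w] \<rho>_nonneg[of w z']];
        unfold factor_cost_def; linarith)
qed

lemma Qfun_triangle: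
  fixes \<rho> :: "'a list \<Rightarrow> 'a list \<Rightarrow> real"
  assumes "\<And>a. 0 \<le> f a" "\<And>a. 0 \<le> g a"
    and "\<And>a b. 0 \<le> \<rho> a b" "\<And>a b c. \<rho> a c \<le> \<rho> a b + \<rho> b c"
    and "arb_decomposable \<rho> p" "1 \<le> p"
    and "\<And>a b. hom_ext f a - hom_ext f b \<le> \<rho> a b powr p"
    and "\<And>a b. hom_ext g b - hom_ext g a \<le> \<rho> a b powr p"
  shows "Qfun f g \<rho> p x z \<le> Qfun f g \<rho> p x y + Qfun f g \<rho> p y z"
proof -
  have "0 < p" using \<open>1 \<le> p\<close> by simp
  obtain xt yt where xt: "xt \<in> factors x" and yt: "yt \<in> factors y"
    and Qxy: "Qfun f g \<rho> p x y = factor_cost f g \<rho> p x y xt yt powr (1 / p)"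
    using Qfun_attained by blast
  obtain yh zh where yh: "yh \<in> factors y" and zh: "zh \<in> factors z"
    and Qyz: "Qfun f g \<rho> p y z = factor_cost f g \<rho> p y z yh zh powr (1 / p)"
    using Qfun_attained by blast
  define A where "A = factor_cost f g \<rho> p x y xt yt"
  define B where "B = factor_cost f g \<rho> p y z yh zh"
  obtain x' z' s t where x': "x' \<in> factors x" and z': "z' \<in> factors z" and "0 \<le> s" "0 \<le> t"
    and "s powr p \<le> A" "t powr p \<le> B"
    and cost: "factor_cost f g \<rho> p x z x' z' \<le> A - s powr p + B - t powr p + (s + t) powr p"
    using factor_cost_triangle[OF assms(1-5) \<open>0 < p\<close> assms(7,8) xt yt yh zh]
    unfolding A_def B_def by blast
  have "0 \<le> A" "0 \<le> B"
    using factor_cost_nonneg assms(1,2) xt yt yh zh unfolding A_def B_def by blast+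
  then have A: "(A powr (1 / p)) powr p = A" and B: "(B powr (1 / p)) powr p = B"
    using \<open>0 < p\<close> by (simp_all add: powr_powr)
  have "s \<le> A powr (1 / p)" "t \<le> B powr (1 / p)"
    using \<open>s powr p \<le> A\<close> \<open>t powr p \<le> B\<close> \<open>0 \<le> s\<close> \<open>0 \<le> t\<close> \<open>0 < p\<close>
    by (simp_all add: powr_le_powr_iff[symmetric, of p] A B)
  then have "factor_cost f g \<rho> p x z x' z' \<le> (A powr (1 / p) + B powr (1 / p)) powr p"
    using cost powr_add_excess_mono[OF \<open>0 \<le> s\<close> _ \<open>0 \<le> t\<close> _ \<open>1 \<le> p\<close>] A B by fastforce
  then have "factor_cost f g \<rho> p x z x' z' powr (1 / p) \<le> A powr (1 / p) + B powr (1 / p)"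
    using factor_cost_nonneg[OF assms(1,2) x' z'] \<open>0 < p\<close>
    by (simp add: powr_inverse_le_iff)
  then show ?thesis
    using Qfun_le[OF x' z', of f g \<rho> p] Qxy Qyz unfolding A_def B_def by linarith
qed

theorem theorem5p3:
  fixes \<rho> :: "'a list \<Rightarrow> 'a list \<Rightarrow> real" and f g :: "'a \<Rightarrow> real" and p :: real
  assumes "1 \<le> p"
    and "quasi_metric \<rho>" and "separating \<rho>" and "arb_decomposable \<rho> p"
    and "\<forall>a. f a > 0" and "\<forall>a. g a \<ge> 0"
    and "\<forall>x y. hom_ext f x - hom_ext f y \<le> \<rho> x y powr p"
    and "\<forall>x y. hom_ext g y - hom_ext g x \<le> \<rho> x y powr p"
  shows "quasi_metric (Qfun f g \<rho> p)"
proof -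
  have \<rho>_nonneg: "\<And>a b. 0 \<le> \<rho> a b" and \<rho>_self: "\<And>a. \<rho> a a = 0"
    and \<rho>_triangle: "\<And>a b c. \<rho> a c \<le> \<rho> a b + \<rho> b c"
    using assms(2) unfolding quasi_metric_def by blast+
  have f_pos: "\<And>a. 0 < f a" and g_nonneg: "\<And>a. 0 \<le> g a"
    using assms(5,6) by blast+
  have Qfun_eq_0: "Qfun f g \<rho> p x y = 0 \<Longrightarrow> x \<in> factors y" for x y
    using factor_if_Qfun_eq_0[OF f_pos g_nonneg assms(3)] .
  show ?thesis
    unfolding quasi_metric_def
  proof (intro conjI allI)
    fix x y z
    show "0 \<le> Qfun f g \<rho> p x y"
      by (rule Qfun_nonneg)
    show "(Qfun f g \<rho> p x y = 0 \<and> Qfun f g \<rho> p y x = 0) \<longleftrightarrow> x = y"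
    proof
      assume "Qfun f g \<rho> p x y = 0 \<and> Qfun f g \<rho> p y x = 0"
      then show "x = y"
        using Qfun_eq_0 factors_antisym by blast
    qed (simp add: Qfun_self \<rho>_self)
    show "Qfun f g \<rho> p x z \<le> Qfun f g \<rho> p x y + Qfun f g \<rho> p y z"
      using less_imp_le[OF f_pos] g_nonneg \<rho>_nonneg \<rho>_triangle assms(4,1)
        assms(7,8)[rule_format] by (rule Qfun_triangle)
  qed
qed

end
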